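(* If $P$ is an $n\times n$ sign pattern all of whose entries are nonzero (i.e., $+$ or $-$) and $\mathcal{Q}(P)$ contains a nilpotent matrix, then $P$ is a spectrally arbitrary pattern.
   Context: A sign pattern is an array with entries in $\{+,-,0\}$; its qualitative class $\mathcal{Q}(P)$ is the set of real matrices of the same size whose entries have the signs prescribed by $P$. An $n\times n$ sign pattern $P$ is spectrally arbitrary if for every monic real polynomial $p$ of degree $n$ there is $A\in\mathcal{Q}(P)$ with characteristic polynomial $p$. *)

theory Defs
  imports "Jordan_Normal_Form.Jordan_Normal_Form"
begin

definition sign_pattern :: "nat \<Rightarrow> int mat \<Rightarrow> bool" where
  "sign_pattern n P \<longleftrightarrow> P \<in> carrier_mat n n \<and>
     (\<forall>i<n. \<forall>j<n. P $$ (i,j) \<in> {-1, 0, 1})"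

definition qual_class :: "int mat \<Rightarrow> real mat set" where
  "qual_class P = {A. A \<in> carrier_mat (dim_row P) (dim_col P) \<and>
     (\<forall>i<dim_row P. \<forall>j<dim_col P. sgn (A $$ (i,j)) = of_int (P $$ (i,j)))}"

definition nilpotent_mat :: "real mat \<Rightarrow> bool" where
  "nilpotent_mat A \<longleftrightarrow> (\<exists>k. A ^\<^sub>m k = 0\<^sub>m (dim_row A) (dim_col A))"

definition spectrally_arbitrary :: "nat \<Rightarrow> int mat \<Rightarrow> bool" where
  "spectrally_arbitrary n P \<longleftrightarrow>
     (\<forall>p :: real poly. monic p \<and> degree p = n \<longrightarrow>
        (\<exists>A \<in> qual_class P. char_poly A = p))"

end

theory Submission
  imports Defs "Jordan_Normal_Form.Jordan_Normal_Form_Existence"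
begin

text \<open>A nilpotent real matrix \<open>A\<close> is similar, \<open>A = S J T\<close> with \<open>T = S\<inverse>\<close>, to its Jordan
  form \<open>J\<close>, whose only nonzero entries are ones on the superdiagonal. For any monic \<open>p\<close> of
  degree \<open>n\<close> there are a scalar \<open>c > 0\<close> and an arbitrarily small perturbation \<open>E\<close> such that
  \<open>c (J + E)\<close> is a companion-type matrix (positive superdiagonal, free last row) with
  characteristic polynomial \<open>p\<close>: the superdiagonal of \<open>J + E\<close> is bounded below by the size
  of \<open>E\<close>, so a large \<open>c\<close> makes the required last row small. Then \<open>S (c (J + E)) T =
  c (A + S E T)\<close> has characteristic polynomial \<open>p\<close>, and, all entries of \<open>A\<close> being nonzero, the
  same sign pattern as \<open>A\<close> once \<open>E\<close> is small enough.\<close>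

lemma char_poly_nilpotent:
  fixes A :: "real mat"
  assumes A: "A \<in> carrier_mat n n" and nil: "A ^\<^sub>m k = 0\<^sub>m n n"
  shows "char_poly A = [:0,1:] ^ n"
proof -
  \<comment> \<open>Over \<open>\<complex>\<close> the characteristic polynomial splits, and every eigenvalue of a nilpotent
    matrix is \<open>0\<close>.\<close>
  interpret of_real_poly: map_poly_inj_comm_ring_hom complex_of_real ..
  let ?B = "map_mat complex_of_real A"
  have B: "?B \<in> carrier_mat n n" using A by simp
  have "?B ^\<^sub>m k = map_mat complex_of_real (A ^\<^sub>m k)"
    by (rule of_real_hom.mat_hom_pow[OF A, symmetric])
  then have Bk: "?B ^\<^sub>m k = 0\<^sub>m n n" unfolding nil by auto
  obtain as where cB: "char_poly ?B = (\<Prod>a\<leftarrow>as. [:- a, 1:])" and len: "length as = n"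
    using char_poly_factorized[OF B] by blast
  have "a = 0" if a: "a \<in> set as" for a
  proof -
    have "poly (char_poly ?B) a = 0" unfolding cB using a by (simp add: poly_prod_list_zero_iff)
    then obtain v where v: "eigenvector ?B v a"
      using eigenvalue_root_char_poly[OF B] unfolding eigenvalue_def by blast
    have vc: "v \<in> carrier_vec n" and "v \<noteq> 0\<^sub>v n" using v A unfolding eigenvector_def by auto
    then obtain i where i: "i < n" "v $ i \<noteq> 0" by (metis eq_vecI carrier_vecD index_zero_vec)
    have "a ^ k \<cdot>\<^sub>v v = ?B ^\<^sub>m k *\<^sub>v v" using eigenvector_pow[OF B v] by simp
    also have "\<dots> = 0\<^sub>v n" unfolding Bk using vc by (intro eq_vecI) auto
    finally have "a ^ k * v $ i = 0" using i vc by (metis index_smult_vec(1) index_zero_vec(1) carrier_vecD)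
    then show "a = 0" using i by simp
  qed
  then have "as = replicate n 0" using len by (auto intro: replicate_eqI)
  then have "char_poly ?B = [:0,1:] ^ n" unfolding cB by (simp add: prod_list_replicate)
  moreover have "char_poly ?B = map_poly complex_of_real (char_poly A)"
    by (rule of_real_hom.char_poly_hom[OF A])
  ultimately have "map_poly complex_of_real (char_poly A) = map_poly complex_of_real ([:0,1:] ^ n)"
    by (simp add: of_real_poly.hom_power)
  then show ?thesis by simp
qed

lemma jordan_matrix_index_mem:
  assumes "i < sum_list (map fst n_as)" and "j < sum_list (map fst n_as)"
  shows "jordan_matrix n_as $$ (i,j) \<in>
    (if i = j then snd ` set n_as else if j = Suc i then {0,1} else {0})"
  using assms
proof (induction n_as arbitrary: i j)
  case Nil
  then show ?case by simp
next
  case (Cons ka n_as)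
  obtain k a where ka: "ka = (k,a)" by (cases ka)
  let ?m = "sum_list (map fst n_as)"
  have ij: "i < k + ?m" "j < k + ?m" using Cons.prems ka by auto
  have index: "jordan_matrix (ka # n_as) $$ (i,j) =
    (if i < k then if j < k then jordan_block k a $$ (i,j) else 0
     else if j < k then 0 else jordan_matrix n_as $$ (i - k, j - k))"
    unfolding ka jordan_matrix_Cons using ij by (subst index_mat_four_block) auto
  show ?case
  proof (cases "i < k \<or> j < k")
    case True
    then show ?thesis unfolding index using ka by auto
  next
    case False
    then have "i - k < ?m" "j - k < ?m" using ij by auto
    then have "jordan_matrix n_as $$ (i - k, j - k) \<in>
        (if i - k = j - k then snd ` set n_as else if j - k = Suc (i - k) then {0,1} else {0})"
      by (rule Cons.IH)
    moreover have "i - k = j - k \<longleftrightarrow> i = j" "j - k = Suc (i - k) \<longleftrightarrow> j = Suc i"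
      using False by auto
    ultimately show ?thesis unfolding index using False by auto
  qed
qed

lemma nilpotent_similar_superdiagonal:
  fixes A :: "real mat"
  assumes A: "A \<in> carrier_mat n n" and nil: "A ^\<^sub>m k = 0\<^sub>m n n"
  obtains J where "similar_mat A J" and "J \<in> carrier_mat n n"
    and "\<And>i j. i < n \<Longrightarrow> j < n \<Longrightarrow> J $$ (i,j) \<in> (if j = Suc i then {0,1} else {0})"
proof -
  have char_A: "char_poly A = [:0,1:] ^ n" by (rule char_poly_nilpotent[OF A nil])
  then have "char_poly A = (\<Prod>a\<leftarrow>replicate n 0. [:- a, 1:])"
    by (simp add: prod_list_replicate)
  then obtain n_as where jnf: "jordan_nf A n_as" using jordan_nf_exists[OF A] by blast
  let ?J = "jordan_matrix n_as"
  have sim: "similar_mat A ?J" using jnf unfolding jordan_nf_def by simp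
  then have J: "?J \<in> carrier_mat n n" using A by (auto dest!: similar_matD)
  have size: "sum_list (map fst n_as) = n" using J by (metis carrier_matD(1) jordan_matrix_dim(1))
  have eigenvalues: "a = 0" if "(m,a) \<in> set n_as" for m a
  proof -
    have "m \<noteq> 0" using jnf that unfolding jordan_nf_def by force
    then have "poly ([:- a, 1:] ^ m) a = 0" by simp
    moreover have "[:- a, 1:] ^ m \<in> set (map (\<lambda>(m,a). [:- a, 1:] ^ m) n_as)"
      using that by force
    ultimately have "poly (char_poly A) a = 0"
      unfolding jordan_nf_char_poly[OF jnf] poly_prod_list_zero_iff by blast
    then show "a = 0" unfolding char_A by simp
  qed
  show ?thesis
  proof (rule that[OF sim J])
    fix i j assume "i < n" "j < n"
    then have "?J $$ (i,j) \<in> (if i = j then snd ` set n_as else if j = Suc i then {0,1} else {0})"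
      using jordan_matrix_index_mem[of i n_as j] unfolding size by blast
    then show "?J $$ (i,j) \<in> (if j = Suc i then {0,1} else {0})"
      using eigenvalues by (cases "i = j") auto
  qed
qed

text \<open>Superdiagonal \<open>s\<close> and last row \<open>w\<close>; for \<open>s = 1\<close> this is the companion matrix of
  \<open>x\<^sup>n - (\<Sum>j<n. w j x\<^sup>j)\<close>.\<close>
definition companion_mat :: "nat \<Rightarrow> (nat \<Rightarrow> 'a) \<Rightarrow> (nat \<Rightarrow> 'a) \<Rightarrow> 'a :: monoid_add mat" where
  "companion_mat n s w =
     mat n n (\<lambda>(i,j). (if j = Suc i then s i else 0) + (if i = n - 1 then w j else 0))"

lemma companion_mat_carrier [simp]: "companion_mat n s w \<in> carrier_mat n n"
  unfolding companion_mat_def by simp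

lemma char_poly_companion_mat_Suc:
  fixes s w :: "nat \<Rightarrow> 'a :: comm_ring_1"
  shows "char_poly (companion_mat (Suc n) s w) =
    [:0,1:] * char_poly (companion_mat n (\<lambda>i. s (Suc i)) (\<lambda>i. w (Suc i))) - [:w 0 * prod s {..<n}:]"
proof -
  let ?C = "char_poly_matrix (companion_mat (Suc n) s w)"
  let ?X = "[:0,1:] :: 'a poly"
  have C: "?C \<in> carrier_mat (Suc n) (Suc n)" by simp
  have dim_C: "dim_row ?C = Suc n" "dim_col ?C = Suc n" using carrier_matD[OF C] by simp_all
  have C_index: "?C $$ (i,j) = (if i = j then ?X else 0)
      - [:(if j = Suc i then s i else 0) + (if i = n then w j else 0):]"
    if "i < Suc n" "j < Suc n" for i j
    using that unfolding char_poly_matrix_def companion_mat_def by auto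
  have minor_0: "mat_delete ?C 0 0 = char_poly_matrix (companion_mat n (\<lambda>i. s (Suc i)) (\<lambda>i. w (Suc i)))"
    by (rule eq_matI) (auto simp: mat_delete_def C_index char_poly_matrix_def companion_mat_def)
  have minor_n: "det (mat_delete ?C n 0) = (\<Prod>i<n. - [:s i:])"
  proof -
    let ?D = "mat_delete ?C n 0"
    have D: "?D \<in> carrier_mat n n" using mat_delete_carrier[OF C] by simp
    have D_index: "?D $$ (i,j) = (if i = Suc j then ?X else 0) - [:if j = i then s i else 0:]"
      if "i < n" "j < n" for i j
      using that C unfolding mat_delete_def by (auto simp: C_index dim_C)
    have "det ?D = prod_list (diag_mat ?D)"
      by (rule det_lower_triangular[OF _ D]) (use D_index in auto)
    also have "\<dots> = (\<Prod>i<n. - [:s i:])"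
      unfolding prod_list_diag_prod using D D_index by (intro prod.cong) auto
    finally show ?thesis .
  qed
  have "det ?C = (\<Sum>i<Suc n. ?C $$ (i,0) * cofactor ?C i 0)"
    by (rule laplace_expansion_column[OF C]) simp
  also have "\<dots> = (\<Sum>i<Suc n. (if i = 0 then ?X * cofactor ?C i 0 else 0)
                              - (if i = n then [:w 0:] * cofactor ?C i 0 else 0))"
    by (intro sum.cong) (auto simp: C_index algebra_simps)
  also have "\<dots> = ?X * cofactor ?C 0 0 - [:w 0:] * cofactor ?C n 0"
    by (simp add: sum_subtractf)
  also have "cofactor ?C n 0 = [:prod s {..<n}:]"
  proof -
    have "cofactor ?C n 0 = (-1) ^ n * ((-1) ^ n * [:prod s {..<n}:])"
      unfolding cofactor_def minor_n by (simp only: prod_uminus prod_to_poly card_lessThan add_0_right)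
    also have "\<dots> = ((-1) * (-1)) ^ n * [:prod s {..<n}:]"
      by (simp only: mult.assoc power_mult_distrib)
    finally show ?thesis by simp
  qed
  finally show ?thesis
    unfolding char_poly_def cofactor_def minor_0 by (simp add: mult_to_poly)
qed

lemma coeff_char_poly_companion_mat:
  fixes s w :: "nat \<Rightarrow> 'a :: comm_ring_1"
  shows "coeff (char_poly (companion_mat n s w)) j =
    (if j = n then 1 else if j < n then - (w j * prod s {j..<n-1}) else 0)"
proof (induction n arbitrary: s w j)
  case 0
  show ?case unfolding char_poly_def by (simp add: companion_mat_def char_poly_matrix_def coeff_1)
next
  case (Suc n)
  show ?case
  proof (cases j)
    case 0
    then show ?thesis by (simp add: char_poly_companion_mat_Suc lessThan_atLeast0)
  next
    case (Suc i)
    have "prod (\<lambda>k. s (Suc k)) {i..<n-1} = prod s {j..<n}" if "i < n"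
      using that prod.shift_bounds_Suc_ivl[of s i "n - 1"] Suc by simp
    then show ?thesis
      using Suc.IH[of "\<lambda>k. s (Suc k)" "\<lambda>k. w (Suc k)" i] Suc
      by (auto simp: char_poly_companion_mat_Suc coeff_pCons)
  qed
qed

lemma char_poly_companion_mat_eq:
  fixes p :: "'a :: field poly"
  assumes p: "monic p" "degree p = n" and s: "\<And>i. Suc i < n \<Longrightarrow> s i \<noteq> 0"
  shows "char_poly (companion_mat n s (\<lambda>j. - coeff p j / prod s {j..<n-1})) = p"
proof (rule poly_eqI)
  fix j
  have "prod s {j..<n-1} \<noteq> 0" using s by (subst prod_zero_iff) auto
  moreover have "coeff p j = 0" if "j > n" using p that by (simp add: coeff_eq_0)
  ultimately show "coeff (char_poly (companion_mat n s (\<lambda>j. - coeff p j / prod s {j..<n-1}))) j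
      = coeff p j"
    using p by (auto simp: coeff_char_poly_companion_mat)
qed

lemma smult_add_eq_companion_mat:
  fixes J :: "real mat"
  assumes J: "J \<in> carrier_mat n n"
    and J_zero: "\<And>i j. i < n \<Longrightarrow> j < n \<Longrightarrow> j \<noteq> Suc i \<Longrightarrow> J $$ (i,j) = 0"
    and c: "c > 0" and eta: "eta \<ge> 0" and w_le: "\<And>j. j < n \<Longrightarrow> \<bar>w j\<bar> \<le> c * eta"
  obtains E where "E \<in> carrier_mat n n" and "\<And>i j. i < n \<Longrightarrow> j < n \<Longrightarrow> \<bar>E $$ (i,j)\<bar> \<le> eta"
    and "c \<cdot>\<^sub>m (J + E) = companion_mat n (\<lambda>i. c * (J $$ (i, Suc i) + eta)) w"
proof
  define E where "E = mat n n (\<lambda>(i,j). (if j = Suc i then eta else 0) + (if i = n - 1 then w j / c else 0))"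
  show E: "E \<in> carrier_mat n n" unfolding E_def by simp
  show "\<bar>E $$ (i,j)\<bar> \<le> eta" if "i < n" "j < n" for i j
  proof -
    have "\<bar>w j / c\<bar> \<le> eta" using w_le[OF that(2)] c by (simp add: abs_divide pos_divide_le_eq mult.commute)
    then show ?thesis using that eta by (auto simp: E_def)
  qed
  show "c \<cdot>\<^sub>m (J + E) = companion_mat n (\<lambda>i. c * (J $$ (i, Suc i) + eta)) w"
  proof (rule eq_matI)
    fix i j assume "i < dim_row (companion_mat n (\<lambda>i. c * (J $$ (i, Suc i) + eta)) w)"
      and "j < dim_col (companion_mat n (\<lambda>i. c * (J $$ (i, Suc i) + eta)) w)"
    then have ij: "i < n" "j < n" unfolding companion_mat_def by simp_all
    then show "(c \<cdot>\<^sub>m (J + E)) $$ (i,j) = companion_mat n (\<lambda>i. c * (J $$ (i, Suc i) + eta)) w $$ (i,j)"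
      using J_zero[OF ij] c J E
      by (cases "j = Suc i") (auto simp: E_def companion_mat_def algebra_simps)
  qed (use J E in \<open>auto simp: companion_mat_def\<close>)
qed

lemma superdiagonal_perturbation_char_poly:
  fixes J :: "real mat" and p :: "real poly"
  assumes J: "J \<in> carrier_mat n n"
    and J_zero: "\<And>i j. i < n \<Longrightarrow> j < n \<Longrightarrow> j \<noteq> Suc i \<Longrightarrow> J $$ (i,j) = 0"
    and J_nonneg: "\<And>i. Suc i < n \<Longrightarrow> J $$ (i, Suc i) \<ge> 0"
    and eta: "eta > 0" and p: "monic p" "degree p = n"
  obtains c E where "c > 0" and "E \<in> carrier_mat n n"
    and "\<And>i j. i < n \<Longrightarrow> j < n \<Longrightarrow> \<bar>E $$ (i,j)\<bar> \<le> eta"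
    and "char_poly (c \<cdot>\<^sub>m (J + E)) = p"
proof -
  define C where "C = (\<Sum>j<n. \<bar>coeff p j\<bar>)"
  define c where "c = (1 + C) / eta"
  have C: "C \<ge> 0" unfolding C_def by (simp add: sum_nonneg)
  have c: "c > 0" and c_eta: "c * eta = 1 + C" using C eta unfolding c_def by auto
  define s where "s = (\<lambda>i. c * (J $$ (i, Suc i) + eta))"
  define w where "w j = - coeff p j / prod s {j..<n-1}" for j
  have s_ge_1: "s i \<ge> 1" if "Suc i < n" for i
  proof -
    have "c * eta \<le> s i" unfolding s_def using J_nonneg[OF that] c by simp
    then show ?thesis using c_eta C by linarith
  qed
  have w_le: "\<bar>w j\<bar> \<le> c * eta" if "j < n" for j
  proof -
    have "prod s {j..<n-1} \<ge> 1" using s_ge_1 by (intro prod_ge_1) auto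
    then have "\<bar>w j\<bar> \<le> \<bar>coeff p j\<bar>"
      unfolding w_def by (simp add: abs_divide divide_le_eq abs_mult mult_le_cancel_left1)
    also have "\<dots> \<le> C" unfolding C_def using that by (intro member_le_sum) auto
    finally show ?thesis using c_eta by linarith
  qed
  obtain E where E: "E \<in> carrier_mat n n" and E_le: "\<And>i j. i < n \<Longrightarrow> j < n \<Longrightarrow> \<bar>E $$ (i,j)\<bar> \<le> eta"
    and companion: "c \<cdot>\<^sub>m (J + E) = companion_mat n s w"
    using smult_add_eq_companion_mat[where w = w, OF J J_zero c less_imp_le[OF eta] w_le]
    unfolding s_def by blast
  have "char_poly (companion_mat n s w) = p"
    unfolding w_def using s_ge_1 p by (intro char_poly_companion_mat_eq) fastforce+
  with c E E_le show ?thesis unfolding companion[symmetric] by (rule that)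
qed

lemma abs_index_mult_mat_le:
  fixes S E T :: "real mat"
  assumes S: "S \<in> carrier_mat n n" and E: "E \<in> carrier_mat n n" and T: "T \<in> carrier_mat n n"
    and E_le: "\<And>a b. a < n \<Longrightarrow> b < n \<Longrightarrow> \<bar>E $$ (a,b)\<bar> \<le> eta"
    and i: "i < n" and j: "j < n"
  shows "\<bar>(S * E * T) $$ (i,j)\<bar> \<le> eta * (\<Sum>a<n. \<bar>S $$ (i,a)\<bar>) * (\<Sum>b<n. \<bar>T $$ (b,j)\<bar>)"
proof -
  have "(S * E * T) $$ (i,j) = (\<Sum>b<n. (\<Sum>a<n. S $$ (i,a) * E $$ (a,b)) * T $$ (b,j))"
    using S E T i j
    by (simp add: scalar_prod_def lessThan_atLeast0 sum_distrib_left sum_distrib_right mult.assoc)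
      (rule sum.swap)
  also have "\<bar>\<dots>\<bar> \<le> (\<Sum>b<n. (\<Sum>a<n. \<bar>S $$ (i,a)\<bar> * eta) * \<bar>T $$ (b,j)\<bar>)"
  proof (rule order.trans[OF sum_abs sum_mono])
    fix b assume "b \<in> {..<n}"
    then have "\<bar>\<Sum>a<n. S $$ (i,a) * E $$ (a,b)\<bar> \<le> (\<Sum>a<n. \<bar>S $$ (i,a)\<bar> * eta)"
      using E_le by (intro order.trans[OF sum_abs sum_mono]) (auto simp: abs_mult mult_left_mono)
    then show "\<bar>(\<Sum>a<n. S $$ (i,a) * E $$ (a,b)) * T $$ (b,j)\<bar>
        \<le> (\<Sum>a<n. \<bar>S $$ (i,a)\<bar> * eta) * \<bar>T $$ (b,j)\<bar>"
      by (simp add: abs_mult mult_right_mono)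
  qed
  also have "\<dots> = eta * (\<Sum>a<n. \<bar>S $$ (i,a)\<bar>) * (\<Sum>b<n. \<bar>T $$ (b,j)\<bar>)"
    by (simp add: sum_distrib_left sum_distrib_right algebra_simps) (rule sum.swap)
  finally show ?thesis .
qed

lemma sgn_add_eq:
  fixes a e :: real
  assumes "\<bar>e\<bar> < \<bar>a\<bar>"
  shows "sgn (a + e) = sgn a"
  using assms by (cases a "0::real" rule: linorder_cases) (auto simp: sgn_if)

lemma sgn_stable_under_conjugate_perturbation:
  fixes A S T :: "real mat"
  assumes A: "A \<in> carrier_mat n n" and S: "S \<in> carrier_mat n n" and T: "T \<in> carrier_mat n n"
    and A_nonzero: "\<And>i j. i < n \<Longrightarrow> j < n \<Longrightarrow> A $$ (i,j) \<noteq> 0"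
  obtains eta where "eta > 0"
    and "\<And>E i j. E \<in> carrier_mat n n \<Longrightarrow> (\<And>a b. a < n \<Longrightarrow> b < n \<Longrightarrow> \<bar>E $$ (a,b)\<bar> \<le> eta)
      \<Longrightarrow> i < n \<Longrightarrow> j < n \<Longrightarrow> sgn ((A + S * E * T) $$ (i,j)) = sgn (A $$ (i,j))"
proof -
  define eps where "eps = Min (insert 1 ((\<lambda>(i,j). \<bar>A $$ (i,j)\<bar>) ` ({..<n} \<times> {..<n})))"
  have eps: "eps > 0" unfolding eps_def using A_nonzero by (subst Min_gr_iff) auto
  have eps_le: "eps \<le> \<bar>A $$ (i,j)\<bar>" if "i < n" "j < n" for i j
    unfolding eps_def using that by (intro Min_le) force+
  define L where "L = (\<Sum>i<n. \<Sum>a<n. \<bar>S $$ (i,a)\<bar>) * (\<Sum>b<n. \<Sum>j<n. \<bar>T $$ (b,j)\<bar>)"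
  have L: "L \<ge> 0" unfolding L_def by (intro mult_nonneg_nonneg sum_nonneg) auto
  define eta where "eta = eps / (L + 1)"
  have eta: "eta > 0" unfolding eta_def using eps L by simp
  have eta_L: "eta * L < eps" unfolding eta_def using eps L by (simp add: field_simps)
  show ?thesis
  proof (rule that[OF eta])
    fix E i j assume E: "E \<in> carrier_mat n n" and E_le: "\<And>a b. a < n \<Longrightarrow> b < n \<Longrightarrow> \<bar>E $$ (a,b)\<bar> \<le> eta"
      and i: "i < n" and j: "j < n"
    have row: "(\<Sum>a<n. \<bar>S $$ (i,a)\<bar>) \<le> (\<Sum>i<n. \<Sum>a<n. \<bar>S $$ (i,a)\<bar>)"
      by (rule member_le_sum[where f = "\<lambda>i. \<Sum>a<n. \<bar>S $$ (i,a)\<bar>"])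
        (use i in \<open>auto intro: sum_nonneg\<close>)
    have col: "(\<Sum>b<n. \<bar>T $$ (b,j)\<bar>) \<le> (\<Sum>b<n. \<Sum>j<n. \<bar>T $$ (b,j)\<bar>)"
      by (intro sum_mono member_le_sum) (use j in auto)
    have "\<bar>(S * E * T) $$ (i,j)\<bar> \<le> eta * ((\<Sum>a<n. \<bar>S $$ (i,a)\<bar>) * (\<Sum>b<n. \<bar>T $$ (b,j)\<bar>))"
      using abs_index_mult_mat_le[OF S E T E_le i j] by (simp add: mult.assoc)
    also have "\<dots> \<le> eta * L"
      unfolding L_def using row col eta by (intro mult_left_mono mult_mono) (auto intro: sum_nonneg)
    also have "\<dots> < \<bar>A $$ (i,j)\<bar>" using eta_L eps_le[OF i j] by linarith
    finally show "sgn ((A + S * E * T) $$ (i,j)) = sgn (A $$ (i,j))"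
      using A S E T i j by (simp add: sgn_add_eq)
  qed
qed

lemma conjugate_smult_add:
  fixes S J T E :: "'a :: comm_ring_1 mat"
  assumes "S \<in> carrier_mat n n" "J \<in> carrier_mat n n" "T \<in> carrier_mat n n" "E \<in> carrier_mat n n"
  shows "S * (c \<cdot>\<^sub>m (J + E)) * T = c \<cdot>\<^sub>m (S * J * T + S * E * T)"
proof -
  have JE: "J + E \<in> carrier_mat n n" using assms by simp
  have "S * (c \<cdot>\<^sub>m (J + E)) * T = c \<cdot>\<^sub>m (S * (J + E)) * T"
    using mult_smult_distrib[OF assms(1) JE] by simp
  also have "\<dots> = c \<cdot>\<^sub>m (S * (J + E) * T)"
    using assms JE by (intro mult_smult_assoc_mat) auto
  also have "S * (J + E) = S * J + S * E" using assms by (simp add: mult_add_distrib_mat)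
  also have "(S * J + S * E) * T = S * J * T + S * E * T"
    using assms by (intro add_mult_distrib_mat) auto
  finally show ?thesis .
qed

lemma nilpotent_realizes_char_poly_with_same_signs:
  fixes A :: "real mat" and p :: "real poly"
  assumes A: "A \<in> carrier_mat n n" and A_nil: "A ^\<^sub>m k = 0\<^sub>m n n"
    and A_nonzero: "\<And>i j. i < n \<Longrightarrow> j < n \<Longrightarrow> A $$ (i,j) \<noteq> 0"
    and p: "monic p" "degree p = n"
  obtains F where "F \<in> carrier_mat n n" and "char_poly F = p"
    and "\<And>i j. i < n \<Longrightarrow> j < n \<Longrightarrow> sgn (F $$ (i,j)) = sgn (A $$ (i,j))"
proof -
  obtain J where sim: "similar_mat A J" and J: "J \<in> carrier_mat n n"
    and J_index: "\<And>i j. i < n \<Longrightarrow> j < n \<Longrightarrow> J $$ (i,j) \<in> (if j = Suc i then {0,1} else {0})"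
    using nilpotent_similar_superdiagonal[OF A A_nil] by blast
  obtain m S T where carrier: "{A, J, S, T} \<subseteq> carrier_mat m m"
    and ST_m: "S * T = 1\<^sub>m m" "T * S = 1\<^sub>m m" and A_eq: "A = S * J * T"
    using similar_matD[OF sim] by blast
  have "m = n" using carrier A by (metis carrier_matD(1) insert_subset)
  then have S: "S \<in> carrier_mat n n" and T: "T \<in> carrier_mat n n" and ST: "S * T = 1\<^sub>m n" "T * S = 1\<^sub>m n"
    using carrier ST_m by simp_all
  obtain eta :: real where eta: "eta > 0" and sgn_stable: "\<And>E i j. E \<in> carrier_mat n n
      \<Longrightarrow> (\<And>a b. a < n \<Longrightarrow> b < n \<Longrightarrow> \<bar>E $$ (a,b)\<bar> \<le> eta) \<Longrightarrow> i < n \<Longrightarrow> j < n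
      \<Longrightarrow> sgn ((A + S * E * T) $$ (i,j)) = sgn (A $$ (i,j))"
    using sgn_stable_under_conjugate_perturbation[OF A S T A_nonzero] by blast
  have J_zero: "J $$ (i,j) = 0" if "i < n" "j < n" "j \<noteq> Suc i" for i j
    using J_index[of i j] that by simp
  have J_nonneg: "J $$ (i, Suc i) \<ge> 0" if "Suc i < n" for i
    using J_index[of i "Suc i"] that by auto
  obtain c E where c: "c > 0" and E: "E \<in> carrier_mat n n"
    and E_le: "\<And>i j. i < n \<Longrightarrow> j < n \<Longrightarrow> \<bar>E $$ (i,j)\<bar> \<le> eta"
    and char_p: "char_poly (c \<cdot>\<^sub>m (J + E)) = p"
    using superdiagonal_perturbation_char_poly[OF J J_zero J_nonneg eta p] by blast
  show ?thesis
  proof (rule that)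
    show F: "c \<cdot>\<^sub>m (A + S * E * T) \<in> carrier_mat n n" using A S E T by simp
    have "c \<cdot>\<^sub>m (A + S * E * T) = S * (c \<cdot>\<^sub>m (J + E)) * T"
      unfolding A_eq using conjugate_smult_add[OF S J T E] by simp
    then have "similar_mat (c \<cdot>\<^sub>m (A + S * E * T)) (c \<cdot>\<^sub>m (J + E))"
      using S T ST J E F by (intro similar_matI[where n = n]) auto
    then show "char_poly (c \<cdot>\<^sub>m (A + S * E * T)) = p" unfolding char_p[symmetric] by (rule char_poly_similar)
    show "sgn ((c \<cdot>\<^sub>m (A + S * E * T)) $$ (i,j)) = sgn (A $$ (i,j))" if "i < n" "j < n" for i j
      using A S T E c that sgn_stable[OF E E_le that] by (simp add: sgn_mult)
  qed
qed

theorem corollary5p7: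
  fixes n :: nat and P :: "int mat"
  assumes "sign_pattern n P"
    and "\<forall>i<n. \<forall>j<n. P $$ (i,j) \<noteq> 0"
    and "\<exists>A \<in> qual_class P. nilpotent_mat A"
  shows "spectrally_arbitrary n P"
proof -
  have P: "P \<in> carrier_mat n n" using assms(1) unfolding sign_pattern_def by simp
  obtain A k where A_P: "A \<in> qual_class P" and A: "A \<in> carrier_mat n n" and A_nil: "A ^\<^sub>m k = 0\<^sub>m n n"
    using assms(3) P unfolding qual_class_def nilpotent_mat_def by auto
  have sgn_A: "sgn (A $$ (i,j)) = of_int (P $$ (i,j))" if "i < n" "j < n" for i j
    using A_P P that unfolding qual_class_def by auto
  have A_nonzero: "A $$ (i,j) \<noteq> 0" if "i < n" "j < n" for i j
    using sgn_A[OF that] assms(2) that by auto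
  show ?thesis unfolding spectrally_arbitrary_def
  proof (intro allI impI)
    fix p :: "real poly" assume "monic p \<and> degree p = n"
    then obtain F where "F \<in> carrier_mat n n" "char_poly F = p"
      and "\<And>i j. i < n \<Longrightarrow> j < n \<Longrightarrow> sgn (F $$ (i,j)) = sgn (A $$ (i,j))"
      using nilpotent_realizes_char_poly_with_same_signs[OF A A_nil A_nonzero] by blast
    moreover from this have "F \<in> qual_class P" using P sgn_A by (simp add: qual_class_def)
    ultimately show "\<exists>F \<in> qual_class P. char_poly F = p" by blast
  qed
qed

end
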